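(* Let $n\ge1$ and let $X$ be any random variable on $[0,1]$ with output distribution $P_Y$ through the binomial channel with $n$ trials. Set $\epsilon_k:=\mathbb E[\tilde T_k(X)]$ and $h_k:=\frac12\prod_{j=1}^k\frac{n+j}{n-j+1}$ for $1\le k\le n$. Then \[ \chi^2(P_Y\,\|\,P_{Y_r})=\sum_{k=1}^n\frac{\epsilon_k^2}{h_k}. \]
   Context: The binomial channel with $n$ trials has transition law $P_{Y|X}(y|x)=\binom{n}{y}x^y(1-x)^{n-y}$, $x\in[0,1]$, $y\in\{0,\dots,n\}$. $\tilde T_k(x)=\cos(k\arccos(2x-1))$ is the shifted Chebyshev polynomial of the first kind. $P_{Y_r}(y)=\frac{\Gamma(y+1/2)\Gamma(n-y+1/2)}{\pi\,\Gamma(y+1)\Gamma(n-y+1)}$, $y=0,\dots,n$, is the output induced by $X_r\sim\mathrm{Beta}(1/2,1/2)$. $\chi^2(P\|Q)=\sum_y \frac{(P(y)-Q(y))^2}{Q(y)}$. *)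

theory Defs
  imports "HOL-Probability.Probability"
begin

definition shifted_cheb :: "nat \<Rightarrow> real \<Rightarrow> real" where
  "shifted_cheb k x = cos (real k * arccos (2 * x - 1))"

definition binom_channel :: "nat \<Rightarrow> real \<Rightarrow> nat \<Rightarrow> real" where
  "binom_channel n x y = real (n choose y) * x ^ y * (1 - x) ^ (n - y)"

text \<open>Output law induced by the arcsine input Beta(1/2,1/2).\<close>
definition PYr :: "nat \<Rightarrow> nat \<Rightarrow> real" where
  "PYr n y = Gamma (real y + 1/2) * Gamma (real n - real y + 1/2)
             / (pi * Gamma (real y + 1) * Gamma (real n - real y + 1))"

definition chi_sq :: "nat \<Rightarrow> (nat \<Rightarrow> real) \<Rightarrow> (nat \<Rightarrow> real) \<Rightarrow> real" where
  "chi_sq n P Q = (\<Sum>y\<in>{0..n}. (P y - Q y)^2 / Q y)"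

end

theory Submission
  imports Defs
begin

text \<open>
  With \<open>P\<^sub>Y\<^sub>r(y) = C(2y,y) C(2n-2y,n-y) / 4\<^sup>n\<close>, write \<open>x = cos\<^sup>2(a/2)\<close> and
  \<open>z = cos\<^sup>2(b/2)\<close>. Then the kernel \<open>K(x,z) = \<Sum>\<^sub>y W(y|x) W(y|z) / P\<^sub>Y\<^sub>r(y)\<close> of the
  binomial channel \<open>W\<close> is \<open>4\<^sup>n / C(2n,n)\<close> times the part of \<open>(q + p)\<^sup>2\<^sup>n\<close> even in \<open>p\<close>, where
  \<open>p = cos(a/2) cos(b/2)\<close> and \<open>q = sin(a/2) sin(b/2)\<close>; that is, a combination of
  \<open>cos((a - b)/2)\<^sup>2\<^sup>n\<close> and \<open>cos((a + b)/2)\<^sup>2\<^sup>n\<close>. Expanding these powers into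
  Fourier sums gives \<open>K(x,z) = 1 + \<Sum>\<^sub>k T\<^sub>k(x) T\<^sub>k(z) / h\<^sub>k\<close>. The \<open>\<chi>\<^sup>2\<close>-divergence is
  the quadratic form of the centred kernel \<open>K - 1\<close>, evaluated at two independent copies of
  \<open>X\<close>. Integrating the expansion term by term then gives \<open>\<Sum>\<^sub>k \<epsilon>\<^sub>k\<^sup>2 / h\<^sub>k\<close>.
\<close>

lemma pochhammer_half_div_fact:
  "pochhammer (1/2) n / fact n = (real (2*n choose n)) / 4^n"
proof -
  have "fact (2*n) = (4^n * pochhammer (1/2) n * fact n :: real)"
    using fact_double[of n] by (simp add: power_mult)
  then show ?thesis
    by (simp add: binomial_fact field_simps power2_eq_square)
qed

lemma Gamma_nat_plus_half:
  "Gamma (real n + 1/2) = sqrt pi * pochhammer (1/2) n"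
proof -
  have "(1/2 :: real) \<notin> \<int>\<^sub>\<le>\<^sub>0"
    using nonpos_Ints_nonpos by fastforce
  then show ?thesis
    using pochhammer_Gamma[of "1/2 :: real" n] by (simp add: Gamma_one_half_real add.commute)
qed

lemma PYr_eq_central_binomials:
  assumes "y \<le> n"
  shows "PYr n y = real (2*y choose y) * real (2*(n-y) choose (n-y)) / 4^n"
proof -
  have ny: "real n - real y = real (n - y)" using assms by simp
  have Gamma_Suc: "Gamma (real k + 1) = fact k" for k
    using Gamma_fact[of k] by (simp add: add.commute)
  have "PYr n y = (sqrt pi * sqrt pi) * pochhammer (1/2) y * pochhammer (1/2) (n-y)
                  / (pi * fact y * fact (n-y))"
    unfolding PYr_def ny Gamma_nat_plus_half
    by (simp only: Gamma_Suc mult_ac)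
  also have "\<dots> = (pochhammer (1/2) y / fact y) * (pochhammer (1/2) (n-y) / fact (n-y))"
    by simp
  also have "\<dots> = real (2*y choose y) * real (2*(n-y) choose (n-y)) / (4^y * 4^(n-y))"
    unfolding pochhammer_half_div_fact by simp
  also have "(4::real)^y * 4^(n-y) = 4^n"
    using assms by (simp flip: power_add)
  finally show ?thesis .
qed

lemma PYr_pos: "y \<le> n \<Longrightarrow> PYr n y > 0"
  by (simp add: PYr_eq_central_binomials)

lemma gbinomial_minus_half:
  "(-1/2 :: real) gchoose k = (-1)^k * real (2*k choose k) / 4^k"
proof -
  have "(-1/2 :: real) gchoose k = (-1)^k * (pochhammer (1/2) k / fact k)"
    by (simp add: gbinomial_pochhammer)
  then show ?thesis
    by (simp add: pochhammer_half_div_fact)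
qed

lemma sum_PYr: "(\<Sum>y\<le>n. PYr n y) = 1"
proof -
  have "(\<Sum>y\<le>n. PYr n y) = (-1)^n * (\<Sum>y\<le>n. ((-1/2 :: real) gchoose y) * ((-1/2) gchoose (n - y)))"
    unfolding sum_distrib_left
  proof (rule sum.cong)
    fix y assume "y \<in> {..n}"
    then have "y \<le> n" by simp
    then have "(-1::real)^n * ((-1)^y * (-1)^(n-y)) = 1" and "(4::real)^y * 4^(n-y) = 4^n"
      by (simp_all flip: power_add)
    then show "PYr n y = (-1)^n * (((-1/2 :: real) gchoose y) * ((-1/2) gchoose (n - y)))"
      unfolding PYr_eq_central_binomials[OF \<open>y \<le> n\<close>] gbinomial_minus_half
      by (simp add: field_simps)
  qed simp
  also have "\<dots> = (-1)^n * ((-1) gchoose n)"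
    using gbinomial_Vandermonde[of "-1/2 :: real" "-1/2" n] by (simp add: atLeast0AtMost)
  also have "\<dots> = 1"
    by (simp add: gbinomial_pochhammer pochhammer_fact[symmetric] flip: power_add)
  finally show ?thesis .
qed

lemma binomial_sum_even_terms:
  fixes p q :: real
  shows "(q + p)^(2*n) + (q - p)^(2*n) = 2 * (\<Sum>y\<le>n. real (2*n choose (2*y)) * p^(2*y) * q^(2*n - 2*y))"
proof -
  define f where "f j = real (2*n choose j) * p^j * q^(2*n - j)" for j
  have "(q + p)^(2*n) + (q - p)^(2*n) = (\<Sum>j\<le>2*n. f j + real (2*n choose j) * (-p)^j * q^(2*n - j))"
    using binomial_ring[of p q "2*n"] binomial_ring[of "-p" q "2*n"]
    by (simp add: f_def sum.distrib add.commute)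
  also have "\<dots> = (\<Sum>j\<le>2*n. if even j then 2 * f j else 0)"
    by (rule sum.cong) (auto simp: f_def power_minus')
  also have "\<dots> = (\<Sum>j<2*Suc n. if even j then 2 * f j else 0)"
    by (simp add: lessThan_Suc_atMost[symmetric])
  also have "\<dots> = 2 * (\<Sum>y\<le>n. f (2*y))"
    by (simp only: sum_split_even_odd) (simp add: lessThan_Suc_atMost sum_distrib_left)
  finally show ?thesis by (simp add: f_def)
qed

lemma sum_atMost_double_symmetric:
  fixes f :: "nat \<Rightarrow> 'a::comm_semiring_1"
  assumes "\<And>k. k \<le> n \<Longrightarrow> f (n + k) = f (n - k)"
  shows "(\<Sum>j\<le>2*n. f j) = f n + 2 * (\<Sum>k=1..n. f (n - k))"
proof -
  have lower: "(\<Sum>k=1..n. f (n - k)) = (\<Sum>j<n. f j)"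
    by (rule sum.reindex_bij_witness[of _ "\<lambda>j. n - j" "\<lambda>k. n - k"]) auto
  have upper: "(\<Sum>k=1..n. f (n - k)) = (\<Sum>j=Suc n..2*n. f j)"
    using assms by (intro sum.reindex_bij_witness[of _ "\<lambda>j. j - n" "\<lambda>k. n + k"]) auto
  have "{..2*n} = {..<n} \<union> {n} \<union> {Suc n..2*n}" by auto
  then have "(\<Sum>j\<le>2*n. f j) = (\<Sum>j<n. f j) + f n + (\<Sum>j=Suc n..2*n. f j)"
    by (simp only:) (subst sum.union_disjoint; auto simp: add_ac)+
  then show ?thesis
    unfolding lower [symmetric] upper [symmetric] by (simp add: mult_2 algebra_simps)
qed

lemma two_cos_power_even:
  "(2 * cos t)^(2*n) = real (2*n choose n) + 2 * (\<Sum>k=1..n. real (2*n choose (n-k)) * cos (2 * real k * t))"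
proof -
  define f where "f j = real (2*n choose j) * cos (2 * (real j - real n) * t)" for j
  have summand: "Re (of_nat (2*n choose j) * cis t ^ j * cis (-t) ^ (2*n - j)) = f j" if "j \<le> 2*n" for j
  proof -
    have "real j * t + real (2*n - j) * (-t) = 2 * (real j - real n) * t"
      using that by (simp add: of_nat_diff algebra_simps)
    then have "cis t ^ j * cis (-t) ^ (2*n - j) = cis (2 * (real j - real n) * t)"
      by (simp only: Complex.DeMoivre cis_mult)
    then show ?thesis
      by (simp add: f_def mult.assoc)
  qed
  have "cis t + cis (-t) = complex_of_real (2 * cos t)"
    by (simp add: complex_eq_iff)
  then have "(2 * cos t)^(2*n) = Re ((cis t + cis (-t))^(2*n))"
    by simp
  also have "\<dots> = (\<Sum>j\<le>2*n. f j)"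
    unfolding binomial_ring Re_sum using summand by (intro sum.cong) auto
  also have "\<dots> = f n + 2 * (\<Sum>k=1..n. f (n - k))"
  proof (rule sum_atMost_double_symmetric)
    fix k assume "k \<le> n"
    then show "f (n + k) = f (n - k)"
      using binomial_symmetric[of "n - k" "2*n"] by (simp add: f_def of_nat_diff)
  qed
  also have "(\<Sum>k=1..n. f (n - k)) = (\<Sum>k=1..n. real (2*n choose (n-k)) * cos (2 * real k * t))"
    by (intro sum.cong) (auto simp: f_def of_nat_diff)
  finally show ?thesis
    by (simp add: f_def)
qed

lemma two_cos_half_diff_sum_power_even:
  "(2 * cos ((a - b) / 2))^(2*n) + (2 * cos ((a + b) / 2))^(2*n)
     = 2 * real (2*n choose n) + 4 * (\<Sum>k=1..n. real (2*n choose (n-k)) * (cos (real k * a) * cos (real k * b)))"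
proof -
  have double_half: "2 * real k * (g / 2) = real k * g" for k g
    by simp
  have cos_sum: "cos (real k * (a - b)) + cos (real k * (a + b)) = 2 * (cos (real k * a) * cos (real k * b))" for k
    by (simp add: cos_diff cos_add right_diff_distrib distrib_left)
  have "(2 * cos ((a - b) / 2))^(2*n) + (2 * cos ((a + b) / 2))^(2*n)
      = 2 * real (2*n choose n) + 2 * (\<Sum>k=1..n. real (2*n choose (n-k)) * (cos (real k * (a - b)) + cos (real k * (a + b))))"
    unfolding two_cos_power_even double_half by (simp add: sum.distrib algebra_simps)
  also have "\<dots> = 2 * real (2*n choose n) + 4 * (\<Sum>k=1..n. real (2*n choose (n-k)) * (cos (real k * a) * cos (real k * b)))"
    unfolding cos_sum by (simp add: sum_distrib_left)
  finally show ?thesis .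
qed

definition cheb_norm :: "nat \<Rightarrow> nat \<Rightarrow> real" where
  "cheb_norm n k = (1/2) * (\<Prod>j=1..k. (real n + real j) / (real n - real j + 1))"

lemma Suc_times_binomial_Suc_eq:
  "real (Suc k) * real (m choose Suc k) = real (m - k) * real (m choose k)"
  using binomial_absorption[of k m] binomial_absorb_comp[of m k] by (metis of_nat_mult)

lemma cheb_norm_eq_binomial:
  assumes "k \<le> n"
  shows "cheb_norm n k = real (2*n choose n) / (2 * real (2*n choose (n - k)))"
proof -
  have "(\<Prod>j=1..k. (real n + real j) / (real n - real j + 1)) = real (2*n choose n) / real (2*n choose (n - k))"
    using assms
  proof (induction k)
    case 0
    then show ?case by simp
  next
    case (Suc k)
    define c where "c i = real (2*n choose i)" for i
    have "n - k = Suc (n - Suc k)" using Suc.prems by simp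
    then have ratio: "real (n - k) * c (n - k) = real (n + Suc k) * c (n - Suc k)"
      using Suc_times_binomial_Suc_eq[of "n - Suc k" "2*n"] Suc.prems by (simp add: c_def Suc_diff_Suc)
    have pos: "c (n - k) > 0" "c (n - Suc k) > 0" "real (n - k) > 0"
      using Suc.prems by (simp_all add: c_def)
    have "(\<Prod>j=1..Suc k. (real n + real j) / (real n - real j + 1))
        = c n / c (n - k) * (real (n + Suc k) / real (n - k))"
      using Suc by (simp add: c_def of_nat_diff)
    also have "real (n + Suc k) / real (n - k) = c (n - k) / c (n - Suc k)"
      using ratio pos by (simp add: frac_eq_eq mult.commute)
    also have "c n / c (n - k) * (c (n - k) / c (n - Suc k)) = c n / c (n - Suc k)"
      using pos by simp
    finally show ?case by (simp add: c_def)
  qed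
  then show ?thesis
    by (simp add: cheb_norm_def)
qed

lemma cos_sin_half_arccos:
  fixes x :: real
  assumes "0 \<le> x" "x \<le> 1"
  shows "cos (arccos (2*x - 1) / 2) = sqrt x" "sin (arccos (2*x - 1) / 2) = sqrt (1 - x)"
proof -
  define t where "t = arccos (2*x - 1) / 2"
  have range: "-1 \<le> 2*x - 1" "2*x - 1 \<le> 1" using assms by auto
  have t: "0 \<le> t" "t \<le> pi/2"
    using arccos_lbound[OF range] arccos_ubound[OF range] by (auto simp: t_def)
  have cos_sq: "cos t ^ 2 = x"
    using cos_double_cos[of t] cos_arccos[OF range] by (simp add: t_def)
  have sin_sq: "sin t ^ 2 = 1 - x"
    using cos_sq sin_cos_squared_add[of t] by linarith
  have "cos t \<ge> 0" "sin t \<ge> 0"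
    using t by (auto intro: cos_ge_zero sin_ge_zero)
  then have "sqrt x = cos t" "sqrt (1 - x) = sin t"
    using real_sqrt_unique[OF cos_sq] real_sqrt_unique[OF sin_sq] by auto
  then show "cos (arccos (2*x - 1) / 2) = sqrt x" "sin (arccos (2*x - 1) / 2) = sqrt (1 - x)"
    by (simp_all add: t_def)
qed

lemma central_binomial_fact: "real (2*m choose m) = fact (2*m) / (fact m)^2"
  using binomial_fact[of m "2*m"] by (simp add: mult_2 power2_eq_square)

lemma binomial_square_times_central:
  assumes "y \<le> n"
  shows "real (n choose y)^2 * real (2*n choose n)
       = real (2*n choose (2*y)) * real (2*y choose y) * real (2*(n - y) choose (n - y))"
proof -
  have choose_n: "real (n choose y) = fact n / (fact y * fact (n - y))"
    using assms by (simp add: binomial_fact)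
  have choose_2n: "real (2*n choose (2*y)) = fact (2*n) / (fact (2*y) * fact (2*(n - y)))"
    using assms binomial_fact[of "2*y" "2*n"] by (simp add: diff_mult_distrib2)
  show ?thesis
    unfolding central_binomial_fact choose_n choose_2n by (simp add: field_simps power2_eq_square)
qed

lemma binom_channel_product_div_PYr:
  fixes x z :: real
  assumes "0 \<le> x" "x \<le> 1" "0 \<le> z" "z \<le> 1" "y \<le> n"
  defines "p \<equiv> sqrt x * sqrt z" and "q \<equiv> sqrt (1 - x) * sqrt (1 - z)"
  shows "binom_channel n x y * binom_channel n z y / PYr n y
       = 4^n / real (2*n choose n) * (real (2*n choose (2*y)) * p^(2*y) * q^(2*n - 2*y))"
proof -
  define c1 c2 where "c1 = real (2*y choose y)" and "c2 = real (2*(n - y) choose (n - y))"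
  have pos: "c1 > 0" "c2 > 0" "real (2*n choose n) > 0"
    using assms by (simp_all add: c1_def c2_def)
  have "p^(2*y) = (x*z)^y" "q^(2*n - 2*y) = ((1 - x)*(1 - z))^(n - y)"
    using assms by (simp_all add: p_def q_def power_mult power_mult_distrib flip: diff_mult_distrib2)
  then have "binom_channel n x y * binom_channel n z y
      = real (n choose y)^2 * (p^(2*y) * q^(2*n - 2*y))"
    by (simp add: binom_channel_def power2_eq_square power_mult_distrib mult_ac)
  also have "real (n choose y)^2 = real (2*n choose (2*y)) * c1 * c2 / real (2*n choose n)"
    using binomial_square_times_central[OF \<open>y \<le> n\<close>] pos by (simp add: c1_def c2_def field_simps)
  finally show ?thesis
    using pos unfolding PYr_eq_central_binomials[OF \<open>y \<le> n\<close>] c1_def[symmetric] c2_def[symmetric]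
    by (simp add: field_simps)
qed

lemma binom_channel_arcsine_kernel:
  fixes x z :: real
  assumes x: "0 \<le> x" "x \<le> 1" and z: "0 \<le> z" "z \<le> 1"
  shows "(\<Sum>y\<le>n. binom_channel n x y * binom_channel n z y / PYr n y)
       = 1 + (\<Sum>k=1..n. shifted_cheb k x * shifted_cheb k z / cheb_norm n k)"
proof -
  define p where "p = sqrt x * sqrt z"
  define q where "q = sqrt (1 - x) * sqrt (1 - z)"
  define a where "a = arccos (2*x - 1)"
  define b where "b = arccos (2*z - 1)"
  define C where "C k = real (2*n choose (n - k))" for k
  have C_pos: "C k > 0" for k
    by (simp add: C_def)
  have "q + p = cos ((a - b) / 2)" "q - p = - cos ((a + b) / 2)"
    using cos_diff[of "a/2" "b/2"] cos_add[of "a/2" "b/2"] cos_sin_half_arccos[OF x] cos_sin_half_arccos[OF z]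
    by (simp_all add: p_def q_def a_def b_def diff_divide_distrib add_divide_distrib)
  then have cos_halves: "(q + p)^(2*n) + (q - p)^(2*n) = (cos ((a - b) / 2))^(2*n) + (cos ((a + b) / 2))^(2*n)"
    by (simp add: power_mult)
  have "(\<Sum>y\<le>n. binom_channel n x y * binom_channel n z y / PYr n y)
      = 4^n / C 0 * (\<Sum>y\<le>n. real (2*n choose (2*y)) * p^(2*y) * q^(2*n - 2*y))"
    using x z by (simp add: binom_channel_product_div_PYr p_def q_def C_def sum_distrib_left)
  also have "\<dots> = 4^n / (2 * C 0) * ((q + p)^(2*n) + (q - p)^(2*n))"
    by (simp add: binomial_sum_even_terms)
  also have "\<dots> = ((2 * cos ((a - b) / 2))^(2*n) + (2 * cos ((a + b) / 2))^(2*n)) / (2 * C 0)"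
  proof -
    have pow: "(2 * c)^(2*n) = 4^n * c^(2*n)" for c :: real
      by (simp add: power_mult_distrib power_mult)
    show ?thesis
      unfolding cos_halves pow by (simp add: field_simps)
  qed
  also have "\<dots> = 1 + (\<Sum>k=1..n. 2 * C k / C 0 * (cos (real k * a) * cos (real k * b)))"
    using C_pos[of 0] unfolding two_cos_half_diff_sum_power_even
    by (simp add: C_def add_divide_distrib sum_divide_distrib sum_distrib_left mult_ac)
  also have "\<dots> = 1 + (\<Sum>k=1..n. shifted_cheb k x * shifted_cheb k z / cheb_norm n k)"
    by (intro arg_cong2[where f="(+)"] sum.cong)
      (auto simp: cheb_norm_eq_binomial C_def shifted_cheb_def a_def b_def)
  finally show ?thesis .
qed

lemma sum_binom_channel: "(\<Sum>y\<le>n. binom_channel n x y) = 1"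
  using binomial_ring[of x "1 - x" n] by (simp add: binom_channel_def mult_ac)

lemma binom_channel_bounds:
  assumes "0 \<le> x" "x \<le> 1"
  shows "0 \<le> binom_channel n x y" "binom_channel n x y \<le> 1"
proof -
  show nonneg: "0 \<le> binom_channel n x y" for y
    using assms by (simp add: binom_channel_def)
  show "binom_channel n x y \<le> 1"
  proof (cases "y \<le> n")
    case True
    then show ?thesis
      using member_le_sum[of y "{..n}" "binom_channel n x"] nonneg by (simp add: sum_binom_channel)
  qed (simp add: binom_channel_def binomial_eq_0)
qed

lemma binom_channel_centered_kernel:
  fixes x z :: real
  assumes x: "0 \<le> x" "x \<le> 1" and z: "0 \<le> z" "z \<le> 1"
  shows "(\<Sum>y\<le>n. (binom_channel n x y - PYr n y) * (binom_channel n z y - PYr n y) / PYr n y)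
       = (\<Sum>k=1..n. shifted_cheb k x * shifted_cheb k z / cheb_norm n k)"
proof -
  have "(binom_channel n x y - PYr n y) * (binom_channel n z y - PYr n y) / PYr n y
      = binom_channel n x y * binom_channel n z y / PYr n y - binom_channel n x y - binom_channel n z y + PYr n y"
    if "y \<in> {..n}" for y
    using PYr_pos[of y n] that by (simp add: field_simps)
  then show ?thesis
    using binom_channel_arcsine_kernel[OF x z, of n]
    by (simp add: sum.distrib sum_subtractf sum_binom_channel sum_PYr)
qed

lemma integral_sum_weighted_products:
  fixes f :: "'i \<Rightarrow> 'a \<Rightarrow> real"
  assumes "\<And>i. i \<in> I \<Longrightarrow> integrable M (f i)"
  shows "(\<integral>\<omega>. (\<integral>\<omega>'. (\<Sum>i\<in>I. c i * f i \<omega> * f i \<omega>') \<partial>M) \<partial>M) = (\<Sum>i\<in>I. c i * (\<integral>\<omega>. f i \<omega> \<partial>M)^2)"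
  using assms by (simp add: integral_sum power2_eq_square mult.assoc)

lemma sum_sq_integrals_eq_if_kernels_eq:
  fixes f :: "'i \<Rightarrow> 'a \<Rightarrow> real" and g :: "'j \<Rightarrow> 'a \<Rightarrow> real"
  assumes "\<And>i. i \<in> I \<Longrightarrow> integrable M (f i)" and "\<And>j. j \<in> J \<Longrightarrow> integrable M (g j)"
    and "\<And>\<omega> \<omega>'. \<omega> \<in> space M \<Longrightarrow> \<omega>' \<in> space M \<Longrightarrow>
      (\<Sum>i\<in>I. c i * f i \<omega> * f i \<omega>') = (\<Sum>j\<in>J. d j * g j \<omega> * g j \<omega>')"
  shows "(\<Sum>i\<in>I. c i * (\<integral>\<omega>. f i \<omega> \<partial>M)^2) = (\<Sum>j\<in>J. d j * (\<integral>\<omega>. g j \<omega> \<partial>M)^2)"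
proof -
  have "(\<Sum>i\<in>I. c i * (\<integral>\<omega>. f i \<omega> \<partial>M)^2)
      = (\<integral>\<omega>. (\<integral>\<omega>'. (\<Sum>i\<in>I. c i * f i \<omega> * f i \<omega>') \<partial>M) \<partial>M)"
    using assms(1) by (rule integral_sum_weighted_products[symmetric])
  also have "\<dots> = (\<integral>\<omega>. (\<integral>\<omega>'. (\<Sum>j\<in>J. d j * g j \<omega> * g j \<omega>') \<partial>M) \<partial>M)"
    using assms(3) by (intro Bochner_Integration.integral_cong[OF refl]) auto
  also have "\<dots> = (\<Sum>j\<in>J. d j * (\<integral>\<omega>. g j \<omega> \<partial>M)^2)"
    using assms(2) by (rule integral_sum_weighted_products)
  finally show ?thesis .
qed

text \<open>Outside \<open>[-1,1]\<close> the description defining \<open>arccos\<close> is unsatisfiable, so all such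
  arguments share one junk value; this makes \<open>arccos\<close> Borel measurable.\<close>

lemma arccos_out_of_range:
  assumes "\<not> (-1 \<le> y \<and> y \<le> 1)"
  shows "arccos y = arccos 2"
proof -
  have "cos x \<noteq> y" "cos x \<noteq> 2" for x
    using assms cos_le_one[of x] cos_ge_minus_one[of x] by fastforce+
  then show ?thesis
    by (simp add: arccos_def)
qed

lemma borel_measurable_arccos [measurable]: "arccos \<in> borel_measurable borel"
proof -
  have "arccos t = (if t \<in> {-1..1} then arccos t else arccos 2)" for t
    using arccos_out_of_range[of t] by auto
  then have "arccos = (\<lambda>t. if t \<in> {-1..1} then arccos t else arccos 2)" ..
  also have "\<dots> \<in> borel_measurable borel"
    by (intro borel_measurable_continuous_on_if continuous_on_arccos' continuous_on_const) auto
  finally show ?thesis .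
qed

lemma borel_measurable_binom_channel [measurable]: "(\<lambda>x. binom_channel n x y) \<in> borel_measurable borel"
  unfolding binom_channel_def by measurable

lemma borel_measurable_shifted_cheb [measurable]: "shifted_cheb k \<in> borel_measurable borel"
  unfolding shifted_cheb_def[abs_def] by measurable

lemma (in finite_measure) integrable_binom_channel:
  assumes "f \<in> borel_measurable M" and "\<And>\<omega>. \<omega> \<in> space M \<Longrightarrow> f \<omega> \<in> {0..1}"
  shows "integrable M (\<lambda>\<omega>. binom_channel n (f \<omega>) y)"
proof (rule integrable_const_bound[where B=1])
  show "AE \<omega> in M. norm (binom_channel n (f \<omega>) y) \<le> 1"
    using assms(2) binom_channel_bounds by (intro AE_I2) auto
qed (use assms(1) in measurable)

lemma (in finite_measure) integrable_shifted_cheb: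
  assumes "f \<in> borel_measurable M"
  shows "integrable M (\<lambda>\<omega>. shifted_cheb k (f \<omega>))"
proof (rule integrable_const_bound[where B=1])
  show "AE \<omega> in M. norm (shifted_cheb k (f \<omega>)) \<le> 1"
    by (simp add: shifted_cheb_def)
qed (use assms in measurable)

lemma (in prob_space) chi_sq_binom_channel_output:
  assumes "Z \<in> borel_measurable M" and Z: "\<And>\<omega>. \<omega> \<in> space M \<Longrightarrow> Z \<omega> \<in> {0..1}"
  shows "chi_sq n (\<lambda>y. \<integral>\<omega>. binom_channel n (Z \<omega>) y \<partial>M) (PYr n)
       = (\<Sum>k=1..n. (\<integral>\<omega>. shifted_cheb k (Z \<omega>) \<partial>M)^2 / cheb_norm n k)"
proof -
  define W where "W y \<omega> = binom_channel n (Z \<omega>) y - PYr n y" for y \<omega>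
  have integrable_binom: "integrable M (\<lambda>\<omega>. binom_channel n (Z \<omega>) y)" for y
    using assms by (rule integrable_binom_channel)
  have "chi_sq n (\<lambda>y. \<integral>\<omega>. binom_channel n (Z \<omega>) y \<partial>M) (PYr n)
      = (\<Sum>y\<le>n. (1 / PYr n y) * (\<integral>\<omega>. W y \<omega> \<partial>M)^2)"
    using integrable_binom by (simp add: chi_sq_def atLeast0AtMost W_def prob_space)
  also have "\<dots> = (\<Sum>k\<in>{1..n}. (1 / cheb_norm n k) * (\<integral>\<omega>. shifted_cheb k (Z \<omega>) \<partial>M)^2)"
  proof (rule sum_sq_integrals_eq_if_kernels_eq)
    show "integrable M (W y)" for y
      unfolding W_def using integrable_binom by simp
    show "integrable M (\<lambda>\<omega>. shifted_cheb k (Z \<omega>))" for k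
      using assms(1) by (rule integrable_shifted_cheb)
    show "(\<Sum>y\<le>n. 1 / PYr n y * W y \<omega> * W y \<omega>')
        = (\<Sum>k\<in>{1..n}. 1 / cheb_norm n k * shifted_cheb k (Z \<omega>) * shifted_cheb k (Z \<omega>'))"
      if "\<omega> \<in> space M" "\<omega>' \<in> space M" for \<omega> \<omega>'
      using binom_channel_centered_kernel[of "Z \<omega>" "Z \<omega>'" n] Z[OF that(1)] Z[OF that(2)]
      by (simp add: W_def)
  qed
  finally show ?thesis
    by simp
qed

theorem mainTheorem11:
  fixes M :: "'a measure" and X :: "'a \<Rightarrow> real" and n :: nat
  assumes "prob_space M"
    and "X \<in> borel_measurable M"
    and "AE \<omega> in M. X \<omega> \<in> {0..1}"
    and "n \<ge> 1"
  shows "chi_sq n (\<lambda>y. \<integral>\<omega>. binom_channel n (X \<omega>) y \<partial>M) (PYr n)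
         = (\<Sum>k=1..n. (\<integral>\<omega>. shifted_cheb k (X \<omega>) \<partial>M)^2
              / ((1/2) * (\<Prod>j=1..k. (real n + real j) / (real n - real j + 1))))"
proof -
  interpret prob_space M by fact
  define Z where "Z \<omega> = max 0 (min 1 (X \<omega>))" for \<omega>
  have [measurable]: "X \<in> borel_measurable M" "Z \<in> borel_measurable M"
    using assms(2) unfolding Z_def[abs_def] by measurable
  have X_eq_Z: "AE \<omega> in M. X \<omega> = Z \<omega>"
    using assms(3) by eventually_elim (auto simp: Z_def)
  have "(\<integral>\<omega>. binom_channel n (X \<omega>) y \<partial>M) = (\<integral>\<omega>. binom_channel n (Z \<omega>) y \<partial>M)" for y
    using X_eq_Z by (intro integral_cong_AE) auto
  moreover have "(\<integral>\<omega>. shifted_cheb k (X \<omega>) \<partial>M) = (\<integral>\<omega>. shifted_cheb k (Z \<omega>) \<partial>M)" for k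
    using X_eq_Z by (intro integral_cong_AE) auto
  moreover have "Z \<omega> \<in> {0..1}" for \<omega>
    by (simp add: Z_def)
  ultimately show ?thesis
    using chi_sq_binom_channel_output[of Z n] by (simp add: cheb_norm_def mult.commute)
qed

end
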